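(* The 240 minimal vectors of the $E_8$ lattice can be partitioned into 15 coordinate frames. Consequently $E_8$ is the intersection of 15 pairwise congruent lattices in $\mathbb{R}^8$, each similar to $\mathbb{Z}^8$. *)

theory Defs
  imports "HOL-Analysis.Analysis"
begin

definition E8 :: "(real^8) set" where
  "E8 = {x. ((\<forall>i. x$i \<in> \<int>) \<or> (\<forall>i. x$i - 1/2 \<in> \<int>)) \<and> (\<Sum>i\<in>UNIV. x$i) / 2 \<in> \<int>}"

definition E8_min :: "(real^8) set" where
  "E8_min = {x \<in> E8. x \<noteq> 0 \<and> (\<forall>y\<in>E8. y \<noteq> 0 \<longrightarrow> norm x \<le> norm y)}"

definition coordinate_frame :: "(real^8) set \<Rightarrow> bool" where
  "coordinate_frame F \<longleftrightarrow> (\<exists>b :: 8 \<Rightarrow> real^8.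
     (\<forall>i. b i \<noteq> 0) \<and> (\<forall>i j. i \<noteq> j \<longrightarrow> b i \<bullet> b j = 0) \<and>
     (\<forall>i j. norm (b i) = norm (b j)) \<and> F = range b \<union> uminus ` range b)"

definition Z8 :: "(real^8) set" where
  "Z8 = {x. \<forall>i. x$i \<in> \<int>}"

definition similar_to_Z8 :: "(real^8) set \<Rightarrow> bool" where
  "similar_to_Z8 L \<longleftrightarrow> (\<exists>c f. c > 0 \<and> orthogonal_transformation f \<and>
     L = (\<lambda>x. c *\<^sub>R f x) ` Z8)"

definition congruent_lattices :: "(real^8) set \<Rightarrow> (real^8) set \<Rightarrow> bool" where
  "congruent_lattices L M \<longleftrightarrow> (\<exists>f. orthogonal_transformation f \<and> M = f ` L)"

end

theory Submission
  imports Defs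
begin

(* The minimal vectors of E8 are its vectors of squared norm 2: E8 is integral and even, so every
  nonzero vector has squared norm at least 2. They are +-e_i +- e_j and (+-1/2, ..., +-1/2) with an
  even number of minus signs. Indexing coordinates by F_2^3, the vectors +-e_i +- e_(i+c) form a
  frame for each of the 7 nonzero c, and the half-integral ones split into the 8 cosets of the
  first-order Reed-Muller code (the rows of the Sylvester-Hadamard matrix and their negatives),
  each again a frame. For a frame with basis b_1, ..., b_8, |b_i|^2 = 2, the lattice
  {x. x . b_i in Z for all i} is a rotated copy of Z^8 / sqrt 2. It contains E8 since E8 is
  integral, and the intersection of the 15 lattices consists of the vectors with integral inner
  product with every root, which is E8 by unimodularity: the roots e_1 +- e_k and
  (1/2, ..., 1/2) alone already force it. The classification of the roots is checked by
  evaluation on doubled coordinates. *)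

section \<open>Orthogonal frames\<close>

lemma dual_lattice_orthogonal_basis:
  fixes b :: "'n::finite \<Rightarrow> real^'n"
  assumes b: "\<And>i j. b i \<bullet> b j = (if i = j then r\<^sup>2 else 0)" and r: "r > 0"
  obtains f :: "real^'n \<Rightarrow> real^'n" where "orthogonal_transformation f"
    and "{x. \<forall>i. x \<bullet> b i \<in> \<int>} = (\<lambda>x. (1 / r) *\<^sub>R f x) ` {x. \<forall>i. x $ i \<in> \<int>}"
proof -
  define f where "f x = (\<Sum>i\<in>UNIV. (x $ i / r) *\<^sub>R b i)" for x
  have f_b: "f x \<bullet> b k = r * x $ k" for x k
  proof -
    have "f x \<bullet> b k = (\<Sum>i\<in>UNIV. if i = k then x $ i / r * r\<^sup>2 else 0)"
      unfolding f_def inner_sum_left by (intro sum.cong) (auto simp: b)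
    also have "\<dots> = r * x $ k"
      using r by (simp add: power2_eq_square)
    finally show ?thesis .
  qed
  have "linear f"
    unfolding f_def
    by (intro linearI) (auto simp: add_divide_distrib scaleR_add_left sum.distrib scaleR_sum_right)
  moreover have "f x \<bullet> f y = x \<bullet> y" for x y
  proof -
    have "f x \<bullet> f y = (\<Sum>i\<in>UNIV. y $ i / r * (f x \<bullet> b i))"
      by (simp add: f_def [of y] inner_sum_right)
    also have "\<dots> = (\<Sum>i\<in>UNIV. x $ i * y $ i)"
      using r by (intro sum.cong) (simp_all add: f_b)
    finally show ?thesis
      by (simp add: inner_vec_def)
  qed
  ultimately have orth: "orthogonal_transformation f"
    by (simp add: orthogonal_transformation_def)
  have "{x. \<forall>i. x \<bullet> b i \<in> \<int>} = (\<lambda>x. (1 / r) *\<^sub>R f x) ` {x. \<forall>i. x $ i \<in> \<int>}"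
  proof (intro equalityI subsetI)
    fix x assume "x \<in> {x. \<forall>i. x \<bullet> b i \<in> \<int>}"
    moreover obtain y where y: "f y = r *\<^sub>R x"
      using orthogonal_transformation_surj [OF orth] by (metis surjD)
    moreover have "y $ i = x \<bullet> b i" for i
      using f_b [of y i] r by (simp add: y)
    ultimately show "x \<in> (\<lambda>x. (1 / r) *\<^sub>R f x) ` {x. \<forall>i. x $ i \<in> \<int>}"
      using r by (intro image_eqI [of _ _ y]) auto
  next
    fix x assume "x \<in> (\<lambda>x. (1 / r) *\<^sub>R f x) ` {x. \<forall>i. x $ i \<in> \<int>}"
    then show "x \<in> {x. \<forall>i. x \<bullet> b i \<in> \<int>}"
      using r by (auto simp: f_b)
  qed
  with orth show thesis
    by (rule that)
qed

lemma congruent_lattices_scaled_images: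
  fixes f g :: "real^8 \<Rightarrow> real^8"
  assumes f: "orthogonal_transformation f" and g: "orthogonal_transformation g"
  shows "congruent_lattices ((\<lambda>x. c *\<^sub>R f x) ` S) ((\<lambda>x. c *\<^sub>R g x) ` S)"
proof -
  have h: "orthogonal_transformation (g \<circ> inv f)"
    by (intro orthogonal_transformation_compose orthogonal_transformation_inv f g)
  have "(g \<circ> inv f) (c *\<^sub>R f x) = c *\<^sub>R g x" for x
  proof -
    have "(g \<circ> inv f) (c *\<^sub>R f x) = c *\<^sub>R (g \<circ> inv f) (f x)"
      by (rule orthogonal_transformation_scaleR [OF h])
    then show ?thesis
      using orthogonal_transformation_inj [OF f] by simp
  qed
  then have "(\<lambda>x. c *\<^sub>R g x) ` S = (g \<circ> inv f) ` (\<lambda>x. c *\<^sub>R f x) ` S"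
    by (simp add: image_image)
  with h show ?thesis
    unfolding congruent_lattices_def by blast
qed

lemma card_orthogonal_frame:
  fixes b :: "'n::finite \<Rightarrow> 'a::real_inner"
  assumes b: "\<And>i j. b i \<bullet> b j = (if i = j then c else 0)" and c: "c > 0"
  shows "card (range b \<union> uminus ` range b) = 2 * CARD('n)"
proof -
  have "inj b"
    by (rule injI) (metis b c less_irrefl)
  then have "card (range b) = CARD('n)"
    by (simp add: card_image)
  moreover have "range b \<inter> uminus ` range b = {}"
  proof (rule ccontr)
    assume "range b \<inter> uminus ` range b \<noteq> {}"
    then obtain i j where "b i = - b j" by auto
    then have "b i \<bullet> b i = - (b i \<bullet> b j)" by simp
    then show False using b [of i i] b [of i j] c by (simp split: if_splits)
  qed
  ultimately show ?thesis
    by (simp add: card_Un_disjoint card_image)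
qed

lemma coordinate_frame_orthogonal:
  fixes b :: "8 \<Rightarrow> real^8"
  assumes b: "\<And>i j. b i \<bullet> b j = (if i = j then c else 0)" and c: "c > 0"
  shows "coordinate_frame (range b \<union> uminus ` range b)"
  unfolding coordinate_frame_def
proof (intro exI conjI allI impI)
  show "b i \<noteq> 0" for i
    using b [of i i] c by auto
  show "b i \<bullet> b j = 0" if "i \<noteq> j" for i j
    using b that by simp
  show "norm (b i) = norm (b j)" for i j
    using b by (simp add: norm_eq_sqrt_inner)
qed simp

section \<open>Integrality and evenness of E8\<close>

lemma half_of_int_in_Ints_iff: "(of_int n / 2 :: real) \<in> \<int> \<longleftrightarrow> even n"
proof
  assume "of_int n / 2 \<in> (\<int> :: real set)"
  then obtain m where "of_int n / 2 = (of_int m :: real)"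
    by (auto elim: Ints_cases)
  then have "of_int n = (of_int (2 * m) :: real)"
    by simp
  then have "n = 2 * m"
    by (simp only: of_int_eq_iff)
  then show "even n" by simp
next
  assume "even n"
  then show "of_int n / 2 \<in> (\<int> :: real set)"
    by (auto elim: evenE)
qed

lemma E8_coordinates:
  assumes x: "x \<in> E8"
  obtains a :: "8 \<Rightarrow> int" and p :: int
  where "p \<in> {0, 1}" "\<And>i. x $ i = of_int (a i) + of_int p / 2" "even (\<Sum>i\<in>UNIV. a i)"
proof -
  define p :: int where "p = (if \<forall>i. x $ i \<in> \<int> then 0 else 1)"
  define a where "a i = \<lfloor>x $ i\<rfloor>" for i
  have xa: "x $ i = of_int (a i) + of_int p / 2" for i
  proof (cases "\<forall>i. x $ i \<in> \<int>")
    case True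
    then show ?thesis by (simp add: a_def p_def)
  next
    case False
    then have "x $ i - 1/2 \<in> \<int>"
      using x by (auto simp: E8_def)
    then obtain n where "x $ i = of_int n + 1/2"
      by (auto elim!: Ints_cases simp: algebra_simps)
    moreover from this have "a i = n"
      unfolding a_def by (intro floor_unique) auto
    ultimately show ?thesis
      using False by (simp add: p_def)
  qed
  have "(\<Sum>i\<in>UNIV. x $ i) / 2 = of_int (\<Sum>i\<in>UNIV. a i) / 2 + 2 * of_int p"
    by (simp add: xa sum.distrib add_divide_distrib)
  moreover have "(\<Sum>i\<in>UNIV. x $ i) / 2 \<in> \<int>"
    using x by (simp add: E8_def)
  ultimately have "of_int (\<Sum>i\<in>UNIV. a i) / 2 \<in> (\<int> :: real set)"
    by (metis Ints_diff Ints_mult Ints_numeral Ints_of_int add_diff_cancel_right')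
  then have "even (\<Sum>i\<in>UNIV. a i)"
    by (simp only: half_of_int_in_Ints_iff)
  moreover have "p \<in> {0, 1}"
    by (simp add: p_def)
  ultimately show thesis
    using xa that by blast
qed

lemma inner_half_integral_coordinates:
  fixes x y :: "real^8"
  assumes x: "\<And>i. x $ i = of_int (a i) + of_int p / 2"
    and y: "\<And>i. y $ i = of_int (b i) + of_int q / 2"
  shows "x \<bullet> y = of_int (\<Sum>i\<in>UNIV. a i * b i) + of_int q * (of_int (\<Sum>i\<in>UNIV. a i) / 2)
    + of_int p * (of_int (\<Sum>i\<in>UNIV. b i) / 2) + 2 * of_int (p * q)"
proof -
  have "x \<bullet> y = (\<Sum>i\<in>UNIV. of_int (a i * b i) + of_int q * (of_int (a i) / 2)
      + of_int p * (of_int (b i) / 2) + of_int (p * q) / 4)"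
    unfolding inner_vec_def x y by (intro sum.cong) (simp_all add: algebra_simps)
  also have "\<dots> = of_int (\<Sum>i\<in>UNIV. a i * b i) + of_int q * (of_int (\<Sum>i\<in>UNIV. a i) / 2)
      + of_int p * (of_int (\<Sum>i\<in>UNIV. b i) / 2) + 2 * of_int (p * q)"
    by (simp add: sum.distrib sum_distrib_left sum_divide_distrib)
  finally show ?thesis .
qed

lemma E8_inner_Ints:
  assumes "x \<in> E8" "y \<in> E8"
  shows "x \<bullet> y \<in> \<int>"
proof -
  obtain a p where x: "\<And>i. x $ i = of_int (a i) + of_int p / 2" and a: "even (\<Sum>i\<in>UNIV. a i)"
    using E8_coordinates [OF assms(1)] by metis
  obtain b q where y: "\<And>i. y $ i = of_int (b i) + of_int q / 2" and b: "even (\<Sum>i\<in>UNIV. b i)"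
    using E8_coordinates [OF assms(2)] by metis
  show ?thesis
    unfolding inner_half_integral_coordinates [OF x y] using a b
    by (intro Ints_add Ints_mult Ints_of_int Ints_numeral) (simp_all only: half_of_int_in_Ints_iff)
qed

lemma E8_inner_self_even:
  assumes "x \<in> E8"
  obtains n where "x \<bullet> x = 2 * of_int n"
proof -
  obtain a p where p: "p \<in> {0, 1}" and x: "\<And>i. x $ i = of_int (a i) + of_int p / 2"
    and a: "even (\<Sum>i\<in>UNIV. a i)"
    using E8_coordinates [OF assms] by metis
  have "even (\<Sum>i\<in>UNIV. a i * a i)"
    using a by (simp add: even_sum_iff)
  with a obtain s t where s: "(\<Sum>i\<in>UNIV. a i) = 2 * s" and t: "(\<Sum>i\<in>UNIV. a i * a i) = 2 * t"
    by (auto elim!: evenE)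
  have "x \<bullet> x = 2 * of_int (t + p * s + p * p)"
    unfolding inner_half_integral_coordinates [OF x x] s t by (simp add: algebra_simps)
  then show thesis
    by (rule that)
qed

lemma E8_inner_self_ge_2:
  assumes "x \<in> E8" "x \<noteq> 0"
  shows "2 \<le> x \<bullet> x"
proof -
  obtain n where n: "x \<bullet> x = 2 * of_int n"
    using E8_inner_self_even [OF assms(1)] .
  have "0 < x \<bullet> x"
    using assms(2) by simp
  with n show ?thesis
    by simp
qed

lemma E8_min_iff: "x \<in> E8_min \<longleftrightarrow> x \<in> E8 \<and> x \<bullet> x = 2"
proof
  assume x: "x \<in> E8_min"
  define r :: "real^8" where "r = axis 0 1 + axis 1 1"
  have "r \<in> E8"
    by (simp add: r_def E8_def axis_def sum.distrib)
  moreover have r2: "r \<bullet> r = 2"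
    by (simp add: r_def inner_add_left inner_add_right inner_axis_axis)
  ultimately have "norm x \<le> norm r"
    using x by (auto simp: E8_min_def)
  then have "x \<bullet> x \<le> 2"
    using r2 by (simp add: norm_eq_sqrt_inner)
  with x show "x \<in> E8 \<and> x \<bullet> x = 2"
    using E8_inner_self_ge_2 by (force simp: E8_min_def)
next
  assume "x \<in> E8 \<and> x \<bullet> x = 2"
  then show "x \<in> E8_min"
    using E8_inner_self_ge_2 by (auto simp: E8_min_def norm_eq_sqrt_inner)
qed

lemma Ints_or_half_Ints_if_differences_Ints:
  fixes x :: "real^'n"
  assumes diff: "\<And>i. x $ i - x $ i0 \<in> \<int>" and twice: "2 * x $ i0 \<in> \<int>"
  shows "(\<forall>i. x $ i \<in> \<int>) \<or> (\<forall>i. x $ i - 1/2 \<in> \<int>)"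
proof -
  obtain n where n: "2 * x $ i0 = of_int n"
    using twice by (auto elim!: Ints_cases)
  show ?thesis
  proof (cases "even n")
    case True
    then have "x $ i0 \<in> \<int>"
      using n by (auto elim!: evenE)
    then have "x $ i \<in> \<int>" for i
      using Ints_add [OF diff [of i]] by simp
    then show ?thesis by blast
  next
    case False
    then have "x $ i0 - 1/2 \<in> \<int>"
      using n by (auto elim!: oddE simp: field_simps)
    then have "x $ i - 1/2 \<in> \<int>" for i
      using Ints_add [OF diff [of i] \<open>x $ i0 - 1/2 \<in> \<int>\<close>] by simp
    then show ?thesis by blast
  qed
qed

lemma in_E8_if_inner_roots_Ints:
  assumes roots: "\<And>r. r \<in> E8 \<Longrightarrow> r \<bullet> r = 2 \<Longrightarrow> x \<bullet> r \<in> \<int>"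
  shows "x \<in> E8"
proof -
  have root: "x $ 0 + s * x $ k \<in> \<int>" if "k \<noteq> 0" "s \<in> {1, -1}" for k :: 8 and s
  proof -
    let ?r = "axis 0 1 + axis k s"
    have "?r \<in> E8"
      using that by (auto simp: E8_def axis_def sum.distrib)
    moreover have "?r \<bullet> ?r = 2"
      using that by (auto simp: inner_add_left inner_add_right inner_axis_axis)
    ultimately have "x \<bullet> ?r \<in> \<int>"
      by (rule roots)
    then show ?thesis
      by (simp add: inner_add_right inner_axis mult.commute)
  qed
  have "x $ k - x $ 0 \<in> \<int>" for k
  proof (cases "k = 0")
    case False
    have "x $ k - x $ 0 = - (x $ 0 + -1 * x $ k)"
      by simp
    with root [OF False, of "-1"] show ?thesis
      by (metis Ints_minus insertI1 insertI2)
  qed simp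
  moreover have "(x $ 0 + 1 * x $ 1) + (x $ 0 + -1 * x $ 1) \<in> \<int>"
    by (intro Ints_add root) auto
  ultimately have coords: "(\<forall>i. x $ i \<in> \<int>) \<or> (\<forall>i. x $ i - 1/2 \<in> \<int>)"
    by (intro Ints_or_half_Ints_if_differences_Ints) simp_all
  have "(vec (1/2) :: real^8) \<in> E8"
    by (simp add: E8_def)
  moreover have "(vec (1/2) :: real^8) \<bullet> vec (1/2) = 2"
    by (simp add: inner_vec_def)
  ultimately have "x \<bullet> vec (1/2) \<in> \<int>"
    by (rule roots)
  then have "(\<Sum>i\<in>UNIV. x $ i) / 2 \<in> \<int>"
    by (simp add: inner_vec_def sum_divide_distrib)
  with coords show ?thesis
    by (simp add: E8_def)
qed

section \<open>Doubled integer coordinates\<close>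

definition index8 :: "8 \<Rightarrow> nat" where
  "index8 = inv_into {..<8} of_nat"

lemma inj_on_of_nat_8: "inj_on (of_nat :: nat \<Rightarrow> 8) {..<8}"
  by (rule inj_onI) (auto simp: lessThan_nat_numeral less_Suc_eq numeral_eq_Suc)

lemma of_nat_8_image: "(of_nat :: nat \<Rightarrow> 8) ` {..<8} = UNIV"
  using inj_on_of_nat_8 by (simp add: card_image card_subset_eq)

lemma of_nat_index8 [simp]: "of_nat (index8 i) = i"
  unfolding index8_def by (simp add: f_inv_into_f of_nat_8_image)

lemma index8_less [simp]: "index8 i < 8"
  unfolding index8_def by (metis UNIV_I inv_into_into lessThan_iff of_nat_8_image)

lemma index8_of_nat [simp]: "k < 8 \<Longrightarrow> index8 (of_nat k) = k"
  unfolding index8_def by (simp add: inj_on_of_nat_8 inv_into_f_f)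

lemma range_index8: "range index8 = {..<8}"
proof -
  have "k \<in> range index8" if "k < 8" for k
    using that by (metis index8_of_nat rangeI)
  then show ?thesis by auto
qed

lemma sum_UNIV_8: "(\<Sum>i\<in>UNIV. g i) = (\<Sum>k<8. g (of_nat k :: 8))"
  by (simp flip: of_nat_8_image add: sum.reindex inj_on_of_nat_8)

definition half_vec :: "int list \<Rightarrow> real^8" where
  "half_vec u = (\<chi> i. of_int (u ! index8 i) / 2)"

definition list_inner :: "int list \<Rightarrow> int list \<Rightarrow> int" where
  "list_inner u v = sum_list (map2 (*) u v)"

lemma half_vec_of_nat: "k < 8 \<Longrightarrow> half_vec u $ of_nat k = of_int (u ! k) / 2"
  by (simp add: half_vec_def)

lemma inner_half_vec:
  assumes "length u = 8" "length v = 8"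
  shows "half_vec u \<bullet> half_vec v = of_int (list_inner u v) / 4"
proof -
  have "half_vec u \<bullet> half_vec v = (\<Sum>k<8. of_int (u ! k * v ! k) / 4)"
    by (simp add: inner_vec_def sum_UNIV_8 half_vec_of_nat)
  also have "\<dots> = of_int (list_inner u v) / 4"
    using assms by (simp add: list_inner_def sum_list_sum_nth atLeast0LessThan sum_divide_distrib)
  finally show ?thesis .
qed

lemma sum_half_vec:
  assumes "length u = 8"
  shows "(\<Sum>i\<in>UNIV. half_vec u $ i) = of_int (sum_list u) / 2"
  using assms
  by (simp add: sum_UNIV_8 half_vec_of_nat sum_list_sum_nth atLeast0LessThan sum_divide_distrib)

lemma half_vec_inject:
  assumes "length u = 8" "length v = 8"
  shows "half_vec u = half_vec v \<longleftrightarrow> u = v"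
proof
  assume "half_vec u = half_vec v"
  then have "of_int (u ! k) / 2 = (of_int (v ! k) / 2 :: real)" if "k < 8" for k
    using that by (metis half_vec_of_nat)
  then show "u = v"
    using assms by (intro nth_equalityI) auto
qed simp

lemma uminus_half_vec: "length u = 8 \<Longrightarrow> - half_vec u = half_vec (map uminus u)"
  by (simp add: vec_eq_iff half_vec_def)

definition doubled_E8 :: "int list \<Rightarrow> bool" where
  "doubled_E8 u \<longleftrightarrow> length u = 8 \<and> (list_all even u \<or> list_all odd u) \<and> 4 dvd sum_list u"

lemma half_vec_in_E8:
  assumes "doubled_E8 u"
  shows "half_vec u \<in> E8"
proof -
  have len: "length u = 8" and par: "list_all even u \<or> list_all odd u" and sum: "4 dvd sum_list u"
    using assms by (auto simp: doubled_E8_def)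
  from par have "(\<forall>i. half_vec u $ i \<in> \<int>) \<or> (\<forall>i. half_vec u $ i - 1/2 \<in> \<int>)"
  proof
    assume "list_all even u"
    then have ev: "even (u ! index8 i)" for i
      using len by (simp add: list_all_length)
    have "half_vec u $ i \<in> \<int>" for i
      using ev [of i] by (auto simp: half_vec_def elim!: evenE)
    then show ?thesis by blast
  next
    assume "list_all odd u"
    then have od: "odd (u ! index8 i)" for i
      using len by (simp add: list_all_length)
    have "half_vec u $ i - 1/2 \<in> \<int>" for i
      using od [of i] by (auto simp: half_vec_def add_divide_distrib elim!: oddE)
    then show ?thesis by blast
  qed
  moreover have "(\<Sum>i\<in>UNIV. half_vec u $ i) / 2 \<in> \<int>"
    using sum by (auto simp: sum_half_vec [OF len] elim!: dvdE)
  ultimately show ?thesis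
    by (simp add: E8_def)
qed

lemma E8_half_vecE:
  assumes "x \<in> E8"
  obtains u where "doubled_E8 u" "x = half_vec u"
proof -
  obtain a p where p: "p \<in> {0, 1}" and x: "\<And>i. x $ i = of_int (a i) + of_int p / 2"
    and a: "even (\<Sum>i\<in>UNIV. a i)"
    using E8_coordinates [OF assms] by metis
  define u where "u = map (\<lambda>k. 2 * a (of_nat k) + p) [0..<8]"
  have u: "u ! k = 2 * a (of_nat k) + p" if "k < 8" for k
    using that by (simp add: u_def)
  have "x = half_vec u"
    by (simp add: vec_eq_iff half_vec_def u x add_divide_distrib)
  moreover have "list_all even u \<or> list_all odd u"
    using p by (auto simp: list_all_length u_def)
  moreover have "sum_list u = 2 * (\<Sum>i\<in>UNIV. a i) + 8 * p"
    by (simp add: u_def sum_list_sum_nth atLeast0LessThan sum.distrib sum_distrib_left sum_UNIV_8)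
  then have "4 dvd sum_list u"
    using a by (auto elim!: evenE)
  ultimately show thesis
    by (intro that) (simp_all add: doubled_E8_def u_def)
qed

fun square_sum_lists :: "nat \<Rightarrow> int \<Rightarrow> int list \<Rightarrow> int list list" where
  "square_sum_lists 0 s A = (if s = 0 then [[]] else [])"
| "square_sum_lists (Suc n) s A =
    (if s < 0 then [] else concat (map (\<lambda>a. map (Cons a) (square_sum_lists n (s - a * a) A)) A))"

lemma list_inner_self: "list_inner u u = (\<Sum>a\<leftarrow>u. a * a)"
  by (simp add: list_inner_def zip_same_conv_map o_def)

lemma list_inner_self_nonneg: "0 \<le> list_inner u u"
  unfolding list_inner_self by (rule sum_list_nonneg) auto

lemma in_square_sum_lists:
  "length u = n \<Longrightarrow> set u \<subseteq> set A \<Longrightarrow> list_inner u u = s \<Longrightarrow>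
    u \<in> set (square_sum_lists n s A)"
proof (induction u arbitrary: n s)
  case Nil
  then show ?case by (simp add: list_inner_def)
next
  case (Cons a u)
  then obtain m where n: "n = Suc m"
    by auto
  have s: "s = a * a + list_inner u u"
    using Cons.prems(3) by (simp add: list_inner_self)
  then have "\<not> s < 0"
    using list_inner_self_nonneg [of u] zero_le_square [of a] by linarith
  moreover have "u \<in> set (square_sum_lists m (s - a * a) A)"
    using Cons n s by simp
  ultimately show ?case
    using Cons.prems(2) n by auto
qed

lemma square_le_list_inner_self: "a \<in> set u \<Longrightarrow> a * a \<le> list_inner u u"
  unfolding list_inner_self by (rule member_le_sum_list) auto

lemma doubled_E8_root_candidates:
  assumes u: "doubled_E8 u" and norm: "list_inner u u = 8"
  shows "u \<in> set (square_sum_lists 8 8 [-2, 0, 2] @ square_sum_lists 8 8 [-1, 1])"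
proof -
  have bound: "\<bar>a\<bar> \<le> 2" if "a \<in> set u" for a
  proof (rule ccontr)
    assume "\<not> \<bar>a\<bar> \<le> 2"
    then have "3 * 3 \<le> \<bar>a\<bar> * \<bar>a\<bar>"
      by (intro mult_mono) auto
    then show False
      using square_le_list_inner_self [OF that] norm by (simp add: abs_mult_self_eq)
  qed
  from u consider "list_all even u" | "list_all odd u"
    by (auto simp: doubled_E8_def)
  then show ?thesis
  proof cases
    case 1
    have "a \<in> set [-2, 0, 2]" if "a \<in> set u" for a
    proof -
      have "even a" "\<bar>a\<bar> \<le> 2"
        using 1 bound that by (auto simp: list_all_iff)
      then show ?thesis
        by (simp add: abs_le_iff) presburger
    qed
    then have "set u \<subseteq> set [-2, 0, 2]"
      by blast
    then show ?thesis
      using u norm by (simp add: in_square_sum_lists doubled_E8_def)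
  next
    case 2
    have "a \<in> set [-1, 1]" if "a \<in> set u" for a
    proof -
      have "odd a" "\<bar>a\<bar> \<le> 2"
        using 2 bound that by (auto simp: list_all_iff)
      then show ?thesis
        by (simp add: abs_le_iff) presburger
    qed
    then have "set u \<subseteq> set [-1, 1]"
      by blast
    then show ?thesis
      using u norm by (simp add: in_square_sum_lists doubled_E8_def)
  qed
qed

section \<open>The fifteen frames\<close>

definition pair_root :: "nat \<Rightarrow> nat \<Rightarrow> int \<Rightarrow> int list" where
  "pair_root i j s = map (\<lambda>k. if k = i then 2 else if k = j then 2 * s else 0) [0..<8]"

definition pair_frame_basis :: "nat \<Rightarrow> int list list" where
  "pair_frame_basis c = concat (map (\<lambda>i. [pair_root i (xor i c) 1, pair_root i (xor i c) (-1)])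
     (filter (\<lambda>i. i < xor i c) [0..<8]))"

fun sylvester_hadamard :: "nat \<Rightarrow> int list list" where
  "sylvester_hadamard 0 = [[1]]"
| "sylvester_hadamard (Suc n) =
    map (\<lambda>r. r @ r) (sylvester_hadamard n) @ map (\<lambda>r. r @ map uminus r) (sylvester_hadamard n)"

(* The sign patterns (-1)^q(k), k in F_2^3 written in binary, for q in the span of k0 k1, k0 k2 and
  k1 k2: representatives of the cosets of the first-order Reed-Muller code in the even sign
  vectors. *)
definition coset_signs :: "int list list" where
  "coset_signs =
    [[1, 1, 1,  1, 1,  1,  1,  1], [1, 1, 1, -1, 1,  1,  1, -1],
     [1, 1, 1,  1, 1, -1,  1, -1], [1, 1, 1, -1, 1, -1,  1,  1],
     [1, 1, 1,  1, 1,  1, -1, -1], [1, 1, 1, -1, 1,  1, -1,  1],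
     [1, 1, 1,  1, 1, -1, -1,  1], [1, 1, 1, -1, 1, -1, -1, -1]]"

definition frame_bases :: "int list list list" where
  "frame_bases = map pair_frame_basis [1..<8] @
     map (\<lambda>\<sigma>. map (map2 (*) \<sigma>) (sylvester_hadamard 3)) coset_signs"

definition signed_basis :: "int list list \<Rightarrow> int list list" where
  "signed_basis B = B @ map (map uminus) B"

(* For +-2 e_i +- 2 e_j this is (i xor j) - 1. For an odd vector it reads off the coefficients of
  k0 k1, k0 k2 and k1 k2 in the algebraic normal form of its sign pattern, which determine its
  Reed-Muller coset. *)
definition frame_index :: "int list \<Rightarrow> nat" where
  "frame_index u =
    (if even (u ! 0) then
       (let S = filter (\<lambda>k. u ! k \<noteq> 0) [0..<8] in xor (S ! 0) (S ! 1) - 1)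
     else
       (let \<epsilon> = (\<lambda>k. if u ! k < 0 then 1 else 0 :: nat);
            q = (\<lambda>a b c d. (\<epsilon> a + \<epsilon> b + \<epsilon> c + \<epsilon> d) mod 2)
        in 7 + q 0 1 2 3 + 2 * q 0 1 4 5 + 4 * q 0 2 4 6))"

lemma frame_bases_gram:
  "length frame_bases = 15 \<and>
   (\<forall>B\<in>set frame_bases. length B = 8 \<and> (\<forall>u\<in>set B. length u = 8) \<and>
      map (\<lambda>u. map (list_inner u) B) B = map (\<lambda>i. map (\<lambda>j. if i = j then 8 else 0) [0..<8]) [0..<8])"
  by code_simp

(* The lets below make code_simp evaluate the frame table once instead of once per list checked. *)
lemma frame_index_signed_basis:
  "let F = frame_bases in
   \<forall>j\<in>set [0..<15]. \<forall>u\<in>set (signed_basis (F ! j)). frame_index u = j \<and> doubled_E8 u"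
  by code_simp

lemma frame_index_complete:
  "let F = frame_bases in
   \<forall>u\<in>set (square_sum_lists 8 8 [-2, 0, 2] @ square_sum_lists 8 8 [-1, 1]).
     4 dvd sum_list u \<longrightarrow> frame_index u < 15 \<and> u \<in> set (signed_basis (F ! frame_index u))"
  by code_simp

definition frame_vector :: "nat \<Rightarrow> 8 \<Rightarrow> real^8" where
  "frame_vector j i = half_vec (frame_bases ! j ! index8 i)"

definition frame :: "nat \<Rightarrow> (real^8) set" where
  "frame j = range (frame_vector j) \<union> uminus ` range (frame_vector j)"

definition frame_dual_lattice :: "nat \<Rightarrow> (real^8) set" where
  "frame_dual_lattice j = {x. \<forall>i. x \<bullet> frame_vector j i \<in> \<int>}"

lemma finite_frame [simp]: "finite (frame j)"
  by (simp add: frame_def)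

lemma frame_basis_gram:
  assumes "j < 15"
  shows "length (frame_bases ! j) = 8" "\<forall>u\<in>set (frame_bases ! j). length u = 8"
    and "k < 8 \<Longrightarrow> k' < 8 \<Longrightarrow>
      list_inner (frame_bases ! j ! k) (frame_bases ! j ! k') = (if k = k' then 8 else 0)"
proof -
  have B: "frame_bases ! j \<in> set frame_bases"
    using assms frame_bases_gram by simp
  then show "length (frame_bases ! j) = 8" "\<forall>u\<in>set (frame_bases ! j). length u = 8"
    using frame_bases_gram by auto
  assume "k < 8" "k' < 8"
  with B show "list_inner (frame_bases ! j ! k) (frame_bases ! j ! k') = (if k = k' then 8 else 0)"
    using frame_bases_gram
    by (auto dest!: bspec [of _ _ "frame_bases ! j"] dest: arg_cong [where f = "\<lambda>M. M ! k ! k'"])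
qed

lemma inner_frame_vector:
  assumes "j < 15"
  shows "frame_vector j i \<bullet> frame_vector j i' = (if i = i' then 2 else 0)"
proof -
  have "index8 i = index8 i' \<longleftrightarrow> i = i'"
    by (metis of_nat_index8)
  then show ?thesis
    using frame_basis_gram [OF assms] by (simp add: frame_vector_def inner_half_vec)
qed

lemma frame_eq_half_vec_image:
  assumes j: "j < 15"
  shows "frame j = half_vec ` set (signed_basis (frame_bases ! j))"
proof -
  let ?B = "frame_bases ! j"
  have "range (frame_vector j) = half_vec ` (!) ?B ` range index8"
    by (simp add: frame_vector_def image_image)
  also have "(!) ?B ` range index8 = set ?B"
    using frame_basis_gram(1) [OF j] by (auto simp: range_index8 in_set_conv_nth)
  finally have "range (frame_vector j) = half_vec ` set ?B" .
  moreover have "uminus ` half_vec ` set ?B = half_vec ` set (map (map uminus) ?B)"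
    using frame_basis_gram(2) [OF j] by (force simp: uminus_half_vec)
  ultimately show ?thesis
    by (simp add: frame_def signed_basis_def image_Un)
qed

lemma signed_basis_frame_index:
  assumes "j < 15" "u \<in> set (signed_basis (frame_bases ! j))"
  shows "frame_index u = j" "doubled_E8 u"
  using assms frame_index_signed_basis by (simp_all add: Let_def)

lemma frame_subset_E8_min:
  assumes j: "j < 15"
  shows "frame j \<subseteq> E8_min"
proof
  fix x assume x: "x \<in> frame j"
  then have "x \<in> E8"
    using half_vec_in_E8 signed_basis_frame_index(2) [OF j]
    by (auto simp: frame_eq_half_vec_image [OF j])
  moreover have "x \<bullet> x = 2"
    using x inner_frame_vector [OF j] by (auto simp: frame_def)
  ultimately show "x \<in> E8_min"
    by (simp add: E8_min_iff)
qed

lemma frames_disjoint: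
  assumes "j < 15" "k < 15" "j \<noteq> k"
  shows "frame j \<inter> frame k = {}"
proof (rule ccontr)
  assume "frame j \<inter> frame k \<noteq> {}"
  then obtain u v where u: "u \<in> set (signed_basis (frame_bases ! j))"
    and v: "v \<in> set (signed_basis (frame_bases ! k))" and "half_vec u = half_vec v"
    using assms by (auto simp: frame_eq_half_vec_image)
  then have "u = v"
    using signed_basis_frame_index(2) [OF assms(1) u] signed_basis_frame_index(2) [OF assms(2) v]
    by (simp add: half_vec_inject doubled_E8_def)
  then show False
    using signed_basis_frame_index(1) [OF assms(1) u] signed_basis_frame_index(1) [OF assms(2) v]
      assms(3)
    by simp
qed

lemma E8_min_eq_frames: "E8_min = (\<Union>j<15. frame j)"
proof
  show "E8_min \<subseteq> (\<Union>j<15. frame j)"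
  proof
    fix x assume "x \<in> E8_min"
    then have x: "x \<in> E8" "x \<bullet> x = 2"
      by (simp_all add: E8_min_iff)
    obtain u where u: "doubled_E8 u" "x = half_vec u"
      using x(1) by (rule E8_half_vecE)
    then have "list_inner u u = 8"
      using x(2) by (simp add: inner_half_vec doubled_E8_def)
    then have "frame_index u < 15 \<and> u \<in> set (signed_basis (frame_bases ! frame_index u))"
      using u frame_index_complete doubled_E8_root_candidates by (simp add: Let_def doubled_E8_def)
    then show "x \<in> (\<Union>j<15. frame j)"
      using u(2) frame_eq_half_vec_image by blast
  qed
  show "(\<Union>j<15. frame j) \<subseteq> E8_min"
    using frame_subset_E8_min by blast
qed

lemma E8_eq_Inter_frame_dual_lattices: "E8 = (\<Inter>j<15. frame_dual_lattice j)"
proof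
  have "frame_vector j i \<in> E8" if "j < 15" for j i
  proof -
    have "frame_vector j i \<in> frame j"
      by (simp add: frame_def)
    then show ?thesis
      using frame_subset_E8_min [OF that] by (auto simp: E8_min_iff)
  qed
  then show "E8 \<subseteq> (\<Inter>j<15. frame_dual_lattice j)"
    by (auto simp: frame_dual_lattice_def E8_inner_Ints)
next
  show "(\<Inter>j<15. frame_dual_lattice j) \<subseteq> E8"
  proof
    fix x assume x: "x \<in> (\<Inter>j<15. frame_dual_lattice j)"
    show "x \<in> E8"
    proof (rule in_E8_if_inner_roots_Ints)
      fix r assume "r \<in> E8" "r \<bullet> r = 2"
      then have "r \<in> E8_min"
        by (simp add: E8_min_iff)
      then obtain j where j: "j < 15" and "r \<in> frame j"
        by (auto simp: E8_min_eq_frames)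
      then obtain i where "r = frame_vector j i \<or> r = - frame_vector j i"
        by (auto simp: frame_def)
      with x j show "x \<bullet> r \<in> \<int>"
        by (auto simp: frame_dual_lattice_def)
    qed
  qed
qed

lemma frame_dual_lattice_rotated_Z8:
  assumes "j < 15"
  obtains f where "orthogonal_transformation f"
    and "frame_dual_lattice j = (\<lambda>x. (1 / sqrt 2) *\<^sub>R f x) ` Z8"
proof (rule dual_lattice_orthogonal_basis)
  show "frame_vector j i \<bullet> frame_vector j i' = (if i = i' then (sqrt 2)\<^sup>2 else 0)" for i i'
    using inner_frame_vector [OF assms] by simp
qed (auto simp: frame_dual_lattice_def Z8_def intro: that)

theorem mainTheorem7:
  shows "card E8_min = 240 \<and>
    (\<exists>F :: nat \<Rightarrow> (real^8) set.
       (\<forall>j<15. coordinate_frame (F j)) \<and>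
       (\<forall>j<15. \<forall>k<15. j \<noteq> k \<longrightarrow> F j \<inter> F k = {}) \<and>
       (\<Union>j<15. F j) = E8_min) \<and>
    (\<exists>L :: nat \<Rightarrow> (real^8) set.
       (\<forall>j<15. similar_to_Z8 (L j)) \<and>
       (\<forall>j<15. \<forall>k<15. congruent_lattices (L j) (L k)) \<and>
       E8 = (\<Inter>j<15. L j))"
proof (intro conjI exI allI impI)
  have "card E8_min = (\<Sum>j<15. card (frame j))"
    unfolding E8_min_eq_frames by (rule card_UN_disjoint) (auto simp: frames_disjoint)
  also have "\<dots> = 240"
    using card_orthogonal_frame [OF inner_frame_vector] by (simp add: frame_def)
  finally show "card E8_min = 240" .
  show "coordinate_frame (frame j)" if "j < 15" for j
    unfolding frame_def using coordinate_frame_orthogonal [OF inner_frame_vector [OF that]] by simp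
  show "frame j \<inter> frame k = {}" if "j < 15" "k < 15" "j \<noteq> k" for j k
    using frames_disjoint that by blast
  show "(\<Union>j<15. frame j) = E8_min"
    by (simp add: E8_min_eq_frames)
  show "similar_to_Z8 (frame_dual_lattice j)" if "j < 15" for j
    using frame_dual_lattice_rotated_Z8 [OF that] unfolding similar_to_Z8_def
    by (metis divide_pos_pos real_sqrt_gt_zero zero_less_one zero_less_numeral)
  show "congruent_lattices (frame_dual_lattice j) (frame_dual_lattice k)" if "j < 15" "k < 15" for j k
    using frame_dual_lattice_rotated_Z8 [OF that(1)] frame_dual_lattice_rotated_Z8 [OF that(2)]
    by (metis congruent_lattices_scaled_images)
  show "E8 = (\<Inter>j<15. frame_dual_lattice j)"
    by (rule E8_eq_Inter_frame_dual_lattices)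
qed

end
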